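(* Let $(H,B_1,B_2)$ be a Rota-Baxter system of Hopf algebras with cocycle $\sigma$. If $\sigma$ is surjective, then $(H,B_2)$ and $(H,B_1\circ S)$ are Rota-Baxter Hopf algebras.
   Context: $\mathbb{F}$ is a field of characteristic $0$; Sweedler notation $\Delta(a)=a_1\otimes a_2$. A Rota-Baxter system of Hopf algebras is a triple $(H,B_1,B_2)$ where $(H,\cdot,1,\Delta,\epsilon,S)$ is a cocommutative Hopf algebra and $B_1,B_2:H\to H$ are coalgebra homomorphisms with $B_1(1)=B_2(1)=1$ such that for all $a,b\in H$: $B_1(a)B_1(b)=B_1(B_1(a_1)bS(B_2(a_2)))$ and $B_2(a)B_2(b)=B_2(B_1(a_1)bS(B_2(a_2)))$. Its cocycle is $\sigma(a)=B_1(a_1)S(B_2(a_2))$. A Rota-Baxter Hopf algebra is a pair $(H,B)$ where $H$ is a cocommutative Hopf algebra and $B:H\to H$ is a coalgebra homomorphism with $B(a)B(b)=B(a_1B(a_2)\,b\,S(B(a_3)))$ for all $a,b\in H$. *)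

theory Defs
  imports Complex_Main
begin

text \<open>Coproducts are represented by a function giving, for each a, a finite list of pairs
  (x_i, y_i) with Delta(a) = sum_i x_i (tensor) y_i.  Sweedler sums of expressions that are
  bilinear in (a1,a2) are evaluated on this representative.  Equality of tensors in H (tensor) H
  is expressed by equality under all bilinear forms H x H -> k (these separate points of
  H (tensor) H over a field).\<close>

definition sw :: "('h \<Rightarrow> ('h \<times> 'h) list) \<Rightarrow> ('h \<Rightarrow> 'h \<Rightarrow> 'v::comm_monoid_add) \<Rightarrow> 'h \<Rightarrow> 'v" where
  "sw Delta g a = sum_list (map (\<lambda>(x, y). g x y) (Delta a))"

definition bilin :: "('k::field \<Rightarrow> 'h::ring_1 \<Rightarrow> 'h) \<Rightarrow> ('h \<Rightarrow> 'h \<Rightarrow> 'k) \<Rightarrow> bool" where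
  "bilin sc f \<longleftrightarrow> (\<forall>x. Vector_Spaces.linear sc (*) (f x)) \<and> (\<forall>y. Vector_Spaces.linear sc (*) (\<lambda>x. f x y))"

definition trilin :: "('k::field \<Rightarrow> 'h::ring_1 \<Rightarrow> 'h) \<Rightarrow> ('h \<Rightarrow> 'h \<Rightarrow> 'h \<Rightarrow> 'k) \<Rightarrow> bool" where
  "trilin sc t \<longleftrightarrow> (\<forall>y z. Vector_Spaces.linear sc (*) (\<lambda>x. t x y z))
     \<and> (\<forall>x z. Vector_Spaces.linear sc (*) (\<lambda>y. t x y z))
     \<and> (\<forall>x y. Vector_Spaces.linear sc (*) (\<lambda>z. t x y z))"

definition teq :: "('k::field \<Rightarrow> 'h::ring_1 \<Rightarrow> 'h) \<Rightarrow> (('h \<Rightarrow> 'h \<Rightarrow> 'k) \<Rightarrow> 'k) \<Rightarrow> (('h \<Rightarrow> 'h \<Rightarrow> 'k) \<Rightarrow> 'k) \<Rightarrow> bool" where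
  "teq sc s t \<longleftrightarrow> (\<forall>f. bilin sc f \<longrightarrow> s f = t f)"

definition cocomm_hopf ::
  "('k::field \<Rightarrow> 'h::ring_1 \<Rightarrow> 'h) \<Rightarrow> ('h \<Rightarrow> ('h \<times> 'h) list) \<Rightarrow> ('h \<Rightarrow> 'k) \<Rightarrow> ('h \<Rightarrow> 'h) \<Rightarrow> bool" where
  "cocomm_hopf sc Delta eps S \<longleftrightarrow>
     vector_space sc
   \<and> (\<forall>c a b. sc c (a * b) = sc c a * b \<and> sc c (a * b) = a * sc c b)
   \<and> (\<forall>a b. teq sc (\<lambda>f. sw Delta f (a + b)) (\<lambda>f. sw Delta f a + sw Delta f b))
   \<and> (\<forall>c a. teq sc (\<lambda>f. sw Delta f (sc c a)) (\<lambda>f. c * sw Delta f a))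
   \<and> (\<forall>t a. trilin sc t \<longrightarrow>
        sw Delta (\<lambda>x y. sw Delta (\<lambda>u v. t u v y) x) a = sw Delta (\<lambda>x y. sw Delta (\<lambda>u v. t x u v) y) a)
   \<and> Vector_Spaces.linear sc (*) eps
   \<and> (\<forall>a. sw Delta (\<lambda>x y. sc (eps x) y) a = a \<and> sw Delta (\<lambda>x y. sc (eps y) x) a = a)
   \<and> (\<forall>a b. teq sc (\<lambda>f. sw Delta f (a * b))
                     (\<lambda>f. sw Delta (\<lambda>x y. sw Delta (\<lambda>u v. f (x * u) (y * v)) b) a))
   \<and> teq sc (\<lambda>f. sw Delta f 1) (\<lambda>f. f 1 1)
   \<and> (\<forall>a b. eps (a * b) = eps a * eps b) \<and> eps 1 = 1
   \<and> Vector_Spaces.linear sc sc S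
   \<and> (\<forall>a. sw Delta (\<lambda>x y. S x * y) a = sc (eps a) 1 \<and> sw Delta (\<lambda>x y. x * S y) a = sc (eps a) 1)
   \<and> (\<forall>a. teq sc (\<lambda>f. sw Delta f a) (\<lambda>f. sw Delta (\<lambda>x y. f y x) a))"

definition coalg_hom ::
  "('k::field \<Rightarrow> 'h::ring_1 \<Rightarrow> 'h) \<Rightarrow> ('h \<Rightarrow> ('h \<times> 'h) list) \<Rightarrow> ('h \<Rightarrow> 'k) \<Rightarrow> ('h \<Rightarrow> 'h) \<Rightarrow> bool" where
  "coalg_hom sc Delta eps B \<longleftrightarrow>
     Vector_Spaces.linear sc sc B
   \<and> (\<forall>a. teq sc (\<lambda>f. sw Delta f (B a)) (\<lambda>f. sw Delta (\<lambda>x y. f (B x) (B y)) a))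
   \<and> (\<forall>a. eps (B a) = eps a)"

definition rb_system ::
  "('k::field \<Rightarrow> 'h::ring_1 \<Rightarrow> 'h) \<Rightarrow> ('h \<Rightarrow> ('h \<times> 'h) list) \<Rightarrow> ('h \<Rightarrow> 'k) \<Rightarrow> ('h \<Rightarrow> 'h)
    \<Rightarrow> ('h \<Rightarrow> 'h) \<Rightarrow> ('h \<Rightarrow> 'h) \<Rightarrow> bool" where
  "rb_system sc Delta eps S B1 B2 \<longleftrightarrow>
     cocomm_hopf sc Delta eps S
   \<and> coalg_hom sc Delta eps B1 \<and> coalg_hom sc Delta eps B2
   \<and> B1 1 = 1 \<and> B2 1 = 1
   \<and> (\<forall>a b. B1 a * B1 b = B1 (sw Delta (\<lambda>x y. B1 x * b * S (B2 y)) a))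
   \<and> (\<forall>a b. B2 a * B2 b = B2 (sw Delta (\<lambda>x y. B1 x * b * S (B2 y)) a))"

definition rbs_cocycle ::
  "('h::ring_1 \<Rightarrow> ('h \<times> 'h) list) \<Rightarrow> ('h \<Rightarrow> 'h) \<Rightarrow> ('h \<Rightarrow> 'h) \<Rightarrow> ('h \<Rightarrow> 'h) \<Rightarrow> 'h \<Rightarrow> 'h" where
  "rbs_cocycle Delta S B1 B2 a = sw Delta (\<lambda>x y. B1 x * S (B2 y)) a"

text \<open>Rota-Baxter Hopf algebra: B(a)B(b) = B(a1 B(a2) b S(B(a3))), with (a2,a3) from Delta(y)
  where Delta(a) = x (tensor) y (by coassociativity any bracketing gives the same value).\<close>
definition rb_hopf ::
  "('k::field \<Rightarrow> 'h::ring_1 \<Rightarrow> 'h) \<Rightarrow> ('h \<Rightarrow> ('h \<times> 'h) list) \<Rightarrow> ('h \<Rightarrow> 'k) \<Rightarrow> ('h \<Rightarrow> 'h)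
    \<Rightarrow> ('h \<Rightarrow> 'h) \<Rightarrow> bool" where
  "rb_hopf sc Delta eps S B \<longleftrightarrow>
     cocomm_hopf sc Delta eps S
   \<and> coalg_hom sc Delta eps B
   \<and> (\<forall>a b. B a * B b = B (sw Delta (\<lambda>x y. sw Delta (\<lambda>u v. x * B u * b * S (B v)) y) a))"

end

theory Submission
  imports Defs
begin

text \<open>Taking b = 1 in the two Rota-Baxter identities gives B1 (sigma a) = B1 a and
  B2 (sigma a) = B2 a.  Since B1, B2 and (by cocommutativity) S are coalgebra maps, so is sigma,
  hence sigma (sigma a) = B1 (sigma a1) S (B2 (sigma a2)) = sigma a.  An idempotent surjection is
  the identity, so a = B1 (a1) S (B2 (a2)) for all a, which gives B1 a = a1 B2 (a2) and
  B2 a = S (a1) B1 (a2).  Substituting these into the Rota-Baxter system identities and using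
  that S is an anti-multiplicative involution yields the Rota-Baxter Hopf identities for B2
  and for B1 \<circ> S.\<close>

section \<open>Sweedler sums\<close>

lemma sum_list_map_commute:
  fixes F :: "'a \<Rightarrow> 'b \<Rightarrow> 'c::comm_monoid_add"
  shows "sum_list (map (\<lambda>x. sum_list (map (F x) ys)) xs)
       = sum_list (map (\<lambda>y. sum_list (map (\<lambda>x. F x y) xs)) ys)"
  by (induction xs) (auto simp: sum_list_addf)

lemma sw_commute:
  "sw D (\<lambda>x y. sw D (\<lambda>u v. F x y u v) b) a = sw D (\<lambda>u v. sw D (\<lambda>x y. F x y u v) a) b"
  unfolding sw_def
  using sum_list_map_commute[of "\<lambda>p q. F (fst p) (snd p) (fst q) (snd q)" "D b" "D a"]
  by (simp add: case_prod_beta')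

lemma sw_additive:
  assumes "\<And>x y. f (x + y) = f x + f y" and "f 0 = 0"
  shows "f (sw D g a) = sw D (\<lambda>x y. f (g x y)) a"
proof -
  have "f (sum_list (map h xs)) = sum_list (map (\<lambda>p. f (h p)) xs)" for h :: "_ \<Rightarrow> _" and xs
    by (induction xs) (simp_all add: assms)
  then show ?thesis
    unfolding sw_def by (simp add: case_prod_beta')
qed

lemma sw_add: "sw D (\<lambda>x y. g x y + h x y) a = sw D g a + sw D h a"
  unfolding sw_def by (simp add: case_prod_beta' sum_list_addf)

lemma sw_cong: "(\<And>x y. g x y = h x y) \<Longrightarrow> sw D g a = sw D h a"
  by (simp add: sw_def)

section \<open>Cocommutative Hopf algebras\<close>

lemma vector_space_field_mult: "vector_space ((*) :: 'k::field \<Rightarrow> 'k \<Rightarrow> 'k)"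
  by unfold_locales (auto simp: algebra_simps)

locale cocomm_hopf_algebra =
  fixes sc :: "'k::field \<Rightarrow> 'h::ring_1 \<Rightarrow> 'h"
    and Delta :: "'h \<Rightarrow> ('h \<times> 'h) list"
    and eps :: "'h \<Rightarrow> 'k"
    and S :: "'h \<Rightarrow> 'h"
  assumes hopf: "cocomm_hopf sc Delta eps S"
begin

sublocale V: vector_space sc
  using hopf by (simp add: cocomm_hopf_def)

lemma sc_mult: "sc c a * b = sc c (a * b)" "a * sc c b = sc c (a * b)"
  using hopf unfolding cocomm_hopf_def by metis+

definition lin :: "('h \<Rightarrow> 'h) \<Rightarrow> bool" where
  "lin f \<longleftrightarrow> (\<forall>x y. f (x + y) = f x + f y) \<and> (\<forall>c x. f (sc c x) = sc c (f x))"

definition lin_form :: "('h \<Rightarrow> 'k) \<Rightarrow> bool" where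
  "lin_form f \<longleftrightarrow> (\<forall>x y. f (x + y) = f x + f y) \<and> (\<forall>c x. f (sc c x) = c * f x)"

definition bilin_map :: "('h \<Rightarrow> 'h \<Rightarrow> 'h) \<Rightarrow> bool" where
  "bilin_map g \<longleftrightarrow> (\<forall>x. lin (g x)) \<and> (\<forall>y. lin (\<lambda>x. g x y))"

definition trilin_map :: "('h \<Rightarrow> 'h \<Rightarrow> 'h \<Rightarrow> 'h) \<Rightarrow> bool" where
  "trilin_map t \<longleftrightarrow>
     (\<forall>y z. lin (\<lambda>x. t x y z)) \<and> (\<forall>x z. lin (\<lambda>y. t x y z)) \<and> (\<forall>x y. lin (t x y))"

lemma linear_iff_lin: "Vector_Spaces.linear sc sc f \<longleftrightarrow> lin f"
  unfolding Vector_Spaces.linear_iff lin_def using V.vector_space_axioms by auto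

lemma linear_iff_lin_form: "Vector_Spaces.linear sc (*) f \<longleftrightarrow> lin_form f"
  unfolding Vector_Spaces.linear_iff lin_form_def
  using V.vector_space_axioms vector_space_field_mult by auto

lemma lin_add: "lin f \<Longrightarrow> f (x + y) = f x + f y"
  and lin_scale: "lin f \<Longrightarrow> f (sc c x) = sc c (f x)"
  by (simp_all add: lin_def)

lemma lin_zero: "lin f \<Longrightarrow> f 0 = 0"
  by (metis V.scale_zero_left lin_scale)

lemma lin_form_add: "lin_form f \<Longrightarrow> f (x + y) = f x + f y"
  and lin_form_scale: "lin_form f \<Longrightarrow> f (sc c x) = c * f x"
  by (simp_all add: lin_form_def)

lemma lin_form_zero: "lin_form f \<Longrightarrow> f 0 = 0"
  by (metis V.scale_zero_left lin_form_scale mult_zero_left)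

lemma lin_sw: "lin f \<Longrightarrow> f (sw D g a) = sw D (\<lambda>x y. f (g x y)) a"
  by (rule sw_additive) (auto simp: lin_add lin_zero)

lemma lin_form_sw: "lin_form f \<Longrightarrow> f (sw D g a) = sw D (\<lambda>x y. f (g x y)) a"
  by (rule sw_additive) (auto simp: lin_form_add lin_form_zero)

lemma eq_if_lin_forms_agree:
  assumes "\<And>\<phi>. lin_form \<phi> \<Longrightarrow> \<phi> u = \<phi> v"
  shows "u = v"
proof (rule ccontr)
  assume "u \<noteq> v"
  then have indep: "V.independent {u - v}" by simp
  interpret P: vector_space_pair sc "(*)"
    by (simp add: vector_space_pair_def V.vector_space_axioms vector_space_field_mult)
  define \<phi> where "\<phi> = P.construct {u - v} (\<lambda>_. (1::'k))"
  have "Vector_Spaces.linear sc (*) \<phi>"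
    unfolding \<phi>_def by (rule P.linear_construct[OF indep])
  then have \<phi>: "lin_form \<phi>" by (simp add: linear_iff_lin_form)
  have "\<phi> (u - v) = 1"
    unfolding \<phi>_def by (rule P.construct_basis[OF indep]) simp
  moreover have "\<phi> (u - v) + \<phi> v = \<phi> u"
    using lin_form_add[OF \<phi>, of "u - v" v] by simp
  ultimately show False using assms[OF \<phi>] by simp
qed

lemma bilin_lin_form_comp: "lin_form \<phi> \<Longrightarrow> bilin_map g \<Longrightarrow> bilin sc (\<lambda>x y. \<phi> (g x y))"
  unfolding bilin_def bilin_map_def linear_iff_lin_form lin_form_def lin_def by auto

lemma trilin_lin_form_comp: "lin_form \<phi> \<Longrightarrow> trilin_map t \<Longrightarrow> trilin sc (\<lambda>x y z. \<phi> (t x y z))"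
  unfolding trilin_def trilin_map_def linear_iff_lin_form lin_form_def lin_def by auto

text \<open>The tensor identities of cocomm_hopf are stated for k-valued bilinear forms; composing
  with linear forms, which separate points, transfers them to H-valued bilinear maps.\<close>
lemma teq_transfer:
  assumes "teq sc P Q" and "bilin_map g"
    and "\<And>\<phi>. lin_form \<phi> \<Longrightarrow> \<phi> u = P (\<lambda>x y. \<phi> (g x y))"
    and "\<And>\<phi>. lin_form \<phi> \<Longrightarrow> \<phi> v = Q (\<lambda>x y. \<phi> (g x y))"
  shows "u = v"
  using assms by (metis eq_if_lin_forms_agree bilin_lin_form_comp teq_def)

lemma lin_sw_Delta:
  assumes g: "bilin_map g"
  shows "lin (sw Delta g)"
proof -
  have add: "teq sc (\<lambda>f. sw Delta f (a + b)) (\<lambda>f. sw Delta f a + sw Delta f b)"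
    and scale: "teq sc (\<lambda>f. sw Delta f (sc c a)) (\<lambda>f. c * sw Delta f a)" for a b c
    using hopf by (simp_all add: cocomm_hopf_def)
  show ?thesis
    unfolding lin_def
  proof safe
    fix a b
    show "sw Delta g (a + b) = sw Delta g a + sw Delta g b"
      by (rule teq_transfer[OF add g]) (simp_all add: lin_form_sw lin_form_add)
  next
    fix c a
    show "sw Delta g (sc c a) = sc c (sw Delta g a)"
      by (rule teq_transfer[OF scale g]) (simp_all add: lin_form_sw lin_form_scale)
  qed
qed

lemma lin_ident: "lin (\<lambda>x. x)"
  by (simp add: lin_def)

lemma lin_mult_left: "lin f \<Longrightarrow> lin (\<lambda>x. p * f x)"
  by (simp add: lin_def distrib_left sc_mult)

lemma lin_mult_right: "lin f \<Longrightarrow> lin (\<lambda>x. f x * q)"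
  by (simp add: lin_def distrib_right sc_mult)

lemma lin_scale_fun: "lin f \<Longrightarrow> lin (\<lambda>x. sc c (f x))"
  by (simp add: lin_def V.scale_right_distrib V.scale_scale mult.commute)

lemma lin_compose: "lin g \<Longrightarrow> lin f \<Longrightarrow> lin (\<lambda>x. g (f x))"
  by (simp add: lin_def)

lemma lin_antipode: "lin S"
  using hopf by (simp add: cocomm_hopf_def linear_iff_lin)

lemma lin_antipode_compose: "lin f \<Longrightarrow> lin (\<lambda>x. S (f x))"
  by (rule lin_compose[OF lin_antipode])

lemma lin_sw_Delta_compose: "bilin_map g \<Longrightarrow> lin f \<Longrightarrow> lin (\<lambda>x. sw Delta g (f x))"
  by (rule lin_compose[OF lin_sw_Delta])

lemma lin_sw_param:
  assumes G: "\<And>u v. lin (\<lambda>x. G x u v)"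
  shows "lin (\<lambda>x. sw D (\<lambda>u v. G x u v) c)"
  unfolding lin_def
proof safe
  fix x y
  show "sw D (\<lambda>u v. G (x + y) u v) c = sw D (\<lambda>u v. G x u v) c + sw D (\<lambda>u v. G y u v) c"
    by (simp add: lin_add[OF G] sw_add)
next
  fix k x
  have "sc k (sw D (\<lambda>u v. G x u v) c) = sw D (\<lambda>u v. sc k (G x u v)) c"
    by (rule lin_sw) (simp add: lin_def V.scale_right_distrib)
  then show "sw D (\<lambda>u v. G (sc k x) u v) c = sc k (sw D (\<lambda>u v. G x u v) c)"
    by (simp add: lin_scale[OF G])
qed

lemma bilin_mapI: "(\<And>x. lin (g x)) \<Longrightarrow> (\<And>y. lin (\<lambda>x. g x y)) \<Longrightarrow> bilin_map g"
  by (simp add: bilin_map_def)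

lemma trilin_mapI:
  "(\<And>y z. lin (\<lambda>x. t x y z)) \<Longrightarrow> (\<And>x z. lin (\<lambda>y. t x y z)) \<Longrightarrow> (\<And>x y. lin (t x y))
    \<Longrightarrow> trilin_map t"
  by (simp add: trilin_map_def)

lemma lin_bilin_map_left: "bilin_map g \<Longrightarrow> lin f \<Longrightarrow> lin (\<lambda>x. g (f x) c)"
  unfolding bilin_map_def by (auto intro: lin_compose[of "\<lambda>x. g x c", simplified])

lemma lin_bilin_map_right: "bilin_map g \<Longrightarrow> lin f \<Longrightarrow> lin (\<lambda>x. g c (f x))"
  unfolding bilin_map_def by (auto intro: lin_compose[of "g c", simplified])

lemmas lin_intros = lin_scale_fun lin_ident lin_mult_left lin_mult_right
  lin_antipode_compose lin_sw_param lin_sw_Delta_compose bilin_mapI trilin_mapI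

lemma lin_form_counit: "lin_form eps"
  using hopf by (simp add: cocomm_hopf_def linear_iff_lin_form)

lemma counit_mult: "eps (a * b) = eps a * eps b"
  and counit_one: "eps 1 = 1"
  using hopf by (simp_all add: cocomm_hopf_def)

lemma counit_left: "sw Delta (\<lambda>x y. sc (eps x) y) a = a"
  and counit_right: "sw Delta (\<lambda>x y. sc (eps y) x) a = a"
  using hopf by (simp_all add: cocomm_hopf_def)

lemma antipode_left: "sw Delta (\<lambda>x y. S x * y) a = sc (eps a) 1"
  and antipode_right: "sw Delta (\<lambda>x y. x * S y) a = sc (eps a) 1"
  using hopf by (simp_all add: cocomm_hopf_def)

lemma sw_coassoc:
  assumes t: "trilin_map t"
  shows "sw Delta (\<lambda>x y. sw Delta (\<lambda>u v. t u v y) x) a = sw Delta (\<lambda>x y. sw Delta (t x) y) a"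
proof (rule eq_if_lin_forms_agree)
  fix \<phi> assume \<phi>: "lin_form \<phi>"
  have "\<forall>t a. trilin sc t \<longrightarrow>
      sw Delta (\<lambda>x y. sw Delta (\<lambda>u v. t u v y) x) a = sw Delta (\<lambda>x y. sw Delta (t x) y) a"
    using hopf unfolding cocomm_hopf_def by blast
  then show "\<phi> (sw Delta (\<lambda>x y. sw Delta (\<lambda>u v. t u v y) x) a) = \<phi> (sw Delta (\<lambda>x y. sw Delta (t x) y) a)"
    using trilin_lin_form_comp[OF \<phi> t] by (simp add: lin_form_sw[OF \<phi>])
qed

lemma sw_cocomm:
  assumes "bilin_map g"
  shows "sw Delta g a = sw Delta (\<lambda>x y. g y x) a"
proof -
  have "teq sc (\<lambda>f. sw Delta f a) (\<lambda>f. sw Delta (\<lambda>x y. f y x) a)"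
    using hopf unfolding cocomm_hopf_def by blast
  from this assms show ?thesis
    by (rule teq_transfer) (simp_all add: lin_form_sw)
qed

lemma sw_mult:
  assumes "bilin_map g"
  shows "sw Delta g (a * b) = sw Delta (\<lambda>x y. sw Delta (\<lambda>u v. g (x * u) (y * v)) b) a"
proof -
  have "teq sc (\<lambda>f. sw Delta f (a * b)) (\<lambda>f. sw Delta (\<lambda>x y. sw Delta (\<lambda>u v. f (x * u) (y * v)) b) a)"
    using hopf unfolding cocomm_hopf_def by blast
  from this assms show ?thesis
    by (rule teq_transfer) (simp_all add: lin_form_sw)
qed

lemma sw_one:
  assumes "bilin_map g"
  shows "sw Delta g 1 = g 1 1"
proof -
  have "teq sc (\<lambda>f. sw Delta f 1) (\<lambda>f. f 1 1)"
    using hopf unfolding cocomm_hopf_def by blast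
  from this assms show ?thesis
    by (rule teq_transfer) (simp_all add: lin_form_sw)
qed

lemma sw_coalg_hom:
  assumes "coalg_hom sc Delta eps B" and "bilin_map g"
  shows "sw Delta g (B a) = sw Delta (\<lambda>x y. g (B x) (B y)) a"
proof -
  have "teq sc (\<lambda>f. sw Delta f (B a)) (\<lambda>f. sw Delta (\<lambda>x y. f (B x) (B y)) a)"
    using assms(1) unfolding coalg_hom_def by blast
  from this assms(2) show ?thesis
    by (rule teq_transfer) (simp_all add: lin_form_sw)
qed

lemma counit_scale: "eps (sc c x) = c * eps x"
  by (rule lin_form_scale[OF lin_form_counit])

lemma scale_sw: "sc (sw D f a) w = sw D (\<lambda>x y. sc (f x y) w) a"
  by (rule sw_additive[of "\<lambda>c. sc c w"]) (auto simp: V.scale_left_distrib)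

lemma sw_counit_counit: "sw Delta (\<lambda>x y. eps x * eps y) a = eps a"
  using lin_form_sw[OF lin_form_counit, of Delta "\<lambda>x y. sc (eps x) y" a]
  by (simp add: counit_left counit_scale)

lemma lin_eq_sw_counit_left: "lin f \<Longrightarrow> f a = sw Delta (\<lambda>x y. sc (eps x) (f y)) a"
  using lin_sw[of f Delta "\<lambda>x y. sc (eps x) y" a] by (simp add: counit_left lin_scale)

lemma lin_eq_sw_counit_right: "lin f \<Longrightarrow> f a = sw Delta (\<lambda>x y. sc (eps y) (f x)) a"
  using lin_sw[of f Delta "\<lambda>x y. sc (eps y) x" a] by (simp add: counit_right lin_scale)

lemma lin_antipode_left: "lin h \<Longrightarrow> sw Delta (\<lambda>x y. h (S x * y)) a = sc (eps a) (h 1)"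
  using lin_sw[of h Delta "\<lambda>x y. S x * y" a] by (simp add: antipode_left lin_scale)

lemma lin_antipode_right: "lin h \<Longrightarrow> sw Delta (\<lambda>x y. h (x * S y)) a = sc (eps a) (h 1)"
  using lin_sw[of h Delta "\<lambda>x y. x * S y" a] by (simp add: antipode_right lin_scale)

lemma counit_antipode: "eps (S a) = eps a"
proof -
  have "eps a = eps (sc (eps a) 1)"
    by (simp add: counit_scale counit_one)
  also have "\<dots> = sw Delta (\<lambda>x y. eps (S x) * eps y) a"
    by (simp add: antipode_left[symmetric] lin_form_sw[OF lin_form_counit] counit_mult)
  also have "\<dots> = eps (S (sw Delta (\<lambda>x y. sc (eps y) x) a))"
    by (simp add: lin_form_sw[OF lin_form_counit] lin_sw[OF lin_antipode]
        lin_scale[OF lin_antipode] counit_scale mult.commute)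
  finally show ?thesis
    by (simp add: counit_right)
qed

lemma sw_swap23:
  assumes "trilin_map t"
  shows "sw Delta (\<lambda>x y. sw Delta (t x) y) a = sw Delta (\<lambda>x y. sw Delta (\<lambda>u v. t x v u) y) a"
  using assms unfolding trilin_map_def by (intro sw_cong sw_cocomm bilin_mapI) auto

lemma sw_swap12:
  assumes t: "trilin_map t"
  shows "sw Delta (\<lambda>x y. sw Delta (t x) y) a = sw Delta (\<lambda>x y. sw Delta (\<lambda>u v. t u x v) y) a"
proof -
  have "sw Delta (\<lambda>x y. sw Delta (t x) y) a = sw Delta (\<lambda>x y. sw Delta (\<lambda>u v. t u v y) x) a"
    by (rule sw_coassoc[OF t, symmetric])
  also have "\<dots> = sw Delta (\<lambda>x y. sw Delta (\<lambda>u v. t v u y) x) a"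
    using t unfolding trilin_map_def by (intro sw_cong sw_cocomm bilin_mapI) auto
  also have "\<dots> = sw Delta (\<lambda>x y. sw Delta (\<lambda>u v. t u x v) y) a"
    using t sw_coassoc[of "\<lambda>p q r. t q p r" a] unfolding trilin_map_def by auto
  finally show ?thesis .
qed

lemma sw_swap_middle:
  assumes "\<And>v p q. lin (\<lambda>u. h u v p q)" "\<And>u p q. lin (\<lambda>v. h u v p q)"
    and "\<And>u v q. lin (\<lambda>p. h u v p q)" "\<And>u v p. lin (h u v p)"
  shows "sw Delta (\<lambda>x y. sw Delta (\<lambda>u v. sw Delta (h u v) y) x) a
       = sw Delta (\<lambda>x y. sw Delta (\<lambda>u v. sw Delta (\<lambda>p q. h u p v q) y) x) a"
proof -
  have "sw Delta (\<lambda>x y. sw Delta (\<lambda>u v. sw Delta (h u v) y) x) a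
      = sw Delta (\<lambda>x y. sw Delta (\<lambda>u v. sw Delta (h x u) v) y) a"
    by (rule sw_coassoc[of "\<lambda>u v y. sw Delta (h u v) y"]) (rule lin_intros assms)+
  also have "\<dots> = sw Delta (\<lambda>x y. sw Delta (\<lambda>u v. sw Delta (\<lambda>p q. h x p u q) v) y) a"
    by (intro sw_cong sw_swap12[of "h x" for x]) (rule lin_intros assms)+
  also have "\<dots> = sw Delta (\<lambda>x y. sw Delta (\<lambda>u v. sw Delta (\<lambda>p q. h u p v q) y) x) a"
    by (rule sw_coassoc[of "\<lambda>u v y. sw Delta (\<lambda>p q. h u p v q) y", symmetric]) (rule lin_intros assms)+
  finally show ?thesis .
qed

lemma sw_antipode_pairs:
  assumes g: "bilin_map g"
  shows "sw Delta (\<lambda>x y. sw Delta (\<lambda>u v. sw Delta (\<lambda>p q. g (u * S p) (v * S q)) y) x) b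
       = sc (eps b) (g 1 1)"
proof -
  note R = lin_intros lin_bilin_map_left[OF g] lin_bilin_map_right[OF g]
  have "sw Delta (\<lambda>x y. sw Delta (\<lambda>u v. sw Delta (\<lambda>p q. g (u * S p) (v * S q)) y) x) b
      = sw Delta (\<lambda>x y. sw Delta (\<lambda>u v. sw Delta (\<lambda>p q. g (u * S v) (p * S q)) y) x) b"
    by (rule sw_swap_middle) (rule R)+
  also have "\<dots> = sw Delta (\<lambda>x y. sw Delta (\<lambda>u v. sc (eps y) (g (u * S v) 1)) x) b"
    by (intro sw_cong lin_antipode_right) (rule R)+
  also have "\<dots> = sw Delta (\<lambda>x y. sc (eps y) (sc (eps x) (g 1 1))) b"
  proof (intro sw_cong)
    fix x y
    have "lin (\<lambda>z. sc (eps y) (g z 1))"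
      by (rule R)+
    from lin_antipode_right[OF this, of x]
    show "sw Delta (\<lambda>u v. sc (eps y) (g (u * S v) 1)) x = sc (eps y) (sc (eps x) (g 1 1))"
      by (simp add: V.scale_scale mult.commute)
  qed
  also have "\<dots> = sc (sw Delta (\<lambda>x y. eps x * eps y) b) (g 1 1)"
    unfolding scale_sw by (rule sw_cong) (simp add: mult.commute)
  finally show ?thesis
    by (simp only: sw_counit_counit)
qed

text \<open>Delta (S a) = Delta (S a1) (a2 S a4 \<otimes> a3 S a5) = Delta (S a1 a2) (S a3 \<otimes> S a4)
  = S a1 \<otimes> S a2; the first step (sw_antipode_pairs) uses cocommutativity.\<close>
lemma sw_antipode:
  assumes g: "bilin_map g"
  shows "sw Delta g (S a) = sw Delta (\<lambda>x y. g (S x) (S y)) a"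
proof -
  note R = lin_intros lin_bilin_map_left[OF g] lin_bilin_map_right[OF g]
  define F where "F x y1 y2 = sw Delta (\<lambda>m n. sw Delta (\<lambda>u v.
      sw Delta (\<lambda>p q. g (m * (u * S p)) (n * (v * S q))) y2) y1) (S x)" for x y1 y2
  have "sw Delta g (S a) = sw Delta (\<lambda>x y. sc (eps y) (sw Delta g (S x))) a"
    by (rule lin_eq_sw_counit_right) (rule R)+
  also have "\<dots> = sw Delta (\<lambda>x y. sw Delta (F x) y) a"
  proof (rule sw_cong)
    fix x y
    have pairs: "sc (eps y) (g m n) = sw Delta (\<lambda>y1 y2. sw Delta (\<lambda>u v.
        sw Delta (\<lambda>p q. g (m * (u * S p)) (n * (v * S q))) y2) y1) y" for m n
      using sw_antipode_pairs[of "\<lambda>s t. g (m * s) (n * t)" y] R by simp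
    have "sc (eps y) (sw Delta g (S x)) = sw Delta (\<lambda>m n. sc (eps y) (g m n)) (S x)"
      by (rule lin_sw) (rule R)+
    also have "\<dots> = sw Delta (F x) y"
      unfolding pairs F_def by (rule sw_commute)
    finally show "sc (eps y) (sw Delta g (S x)) = sw Delta (F x) y" .
  qed
  also have "\<dots> = sw Delta (\<lambda>x y. sw Delta (\<lambda>x1 x2. F x1 x2 y) x) a"
    by (rule sw_coassoc[symmetric]) (unfold F_def, (rule R)+)
  also have "\<dots> = sw Delta (\<lambda>x y. sc (eps x) (sw Delta (\<lambda>u v. g (S u) (S v)) y)) a"
  proof (rule sw_cong)
    fix x y
    define K where "K s t = sw Delta (\<lambda>p q. g (s * S p) (t * S q)) y" for s t
    have K: "bilin_map K"
      unfolding K_def by (rule R)+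
    have "sw Delta (\<lambda>x1 x2. F x1 x2 y) x = sw Delta (\<lambda>x1 x2. sw Delta K (S x1 * x2)) x"
      by (rule sw_cong) (simp add: F_def K_def sw_mult[OF K] mult.assoc)
    also have "\<dots> = sc (eps x) (K 1 1)"
      using lin_antipode_left[OF lin_sw_Delta[OF K]] by (simp add: sw_one[OF K])
    finally show "sw Delta (\<lambda>x1 x2. F x1 x2 y) x = sc (eps x) (sw Delta (\<lambda>u v. g (S u) (S v)) y)"
      by (simp add: K_def)
  qed
  also have "\<dots> = sw Delta (\<lambda>x y. g (S x) (S y)) a"
    by (rule lin_eq_sw_counit_left[symmetric], rule lin_sw_Delta) (rule R)+
  finally show ?thesis .
qed

lemma antipode_mult_expand:
  "sc (eps a) (S (x * b))
     = sw Delta (\<lambda>y a2. sw Delta (\<lambda>u b'. sw Delta (\<lambda>v b2. S (x * u) * y * v * S b2 * S a2) b') b) a"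
proof -
  have "sw Delta (\<lambda>y a2. sw Delta (\<lambda>u b'. sw Delta (\<lambda>v b2. S (x * u) * y * v * S b2 * S a2) b') b) a
      = sw Delta (\<lambda>y a2. sw Delta (\<lambda>u b'. sc (eps b') (S (x * u) * y * S a2)) b) a"
    using lin_antipode_right[of "\<lambda>z. S (x * u) * y * z * S a2" for u y a2]
    by (intro sw_cong) (simp add: lin_intros mult.assoc)
  also have "\<dots> = sw Delta (\<lambda>y a2. S (x * b) * y * S a2) a"
    by (intro sw_cong lin_eq_sw_counit_right[symmetric]) (rule lin_intros)+
  also have "\<dots> = sc (eps a) (S (x * b))"
    using lin_antipode_right[of "\<lambda>z. S (x * b) * z" a] by (simp add: lin_intros mult.assoc)
  finally show ?thesis ..
qed

text \<open>S (a b) = S (a1 b1) a2 b2 S b3 S a3 = eps (a1 b1) S b2 S a2 = S b S a.\<close>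
lemma antipode_mult: "S (a * b) = S b * S a"
proof -
  have "S (a * b) = sw Delta (\<lambda>x a'. sc (eps a') (S (x * b))) a"
    by (rule lin_eq_sw_counit_right) (rule lin_intros)+
  also have "\<dots> = sw Delta (\<lambda>x a'. sw Delta (\<lambda>y a2.
      sw Delta (\<lambda>u b'. sw Delta (\<lambda>v b2. S (x * u) * y * v * S b2 * S a2) b') b) a') a"
    by (simp only: antipode_mult_expand)
  also have "\<dots> = sw Delta (\<lambda>a1 a2. sw Delta (\<lambda>x y.
      sw Delta (\<lambda>u b'. sw Delta (\<lambda>v b2. S (x * u) * y * v * S b2 * S a2) b') b) a1) a"
    by (rule sw_coassoc[symmetric]) (rule lin_intros)+
  also have "\<dots> = sw Delta (\<lambda>a1 a2. sw Delta (\<lambda>x y.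
      sw Delta (\<lambda>b1 b2. sw Delta (\<lambda>u v. S (x * u) * y * v * S b2 * S a2) b1) b) a1) a"
    by (intro sw_cong sw_coassoc[symmetric]) (rule lin_intros)+
  also have "\<dots> = sw Delta (\<lambda>a1 a2. sw Delta (\<lambda>b1 b2.
      sw Delta (\<lambda>x y. sw Delta (\<lambda>u v. S (x * u) * y * v * S b2 * S a2) b1) a1) b) a"
    by (intro sw_cong sw_commute)
  also have "\<dots> = sw Delta (\<lambda>a1 a2. sw Delta (\<lambda>b1 b2. sc (eps a1 * eps b1) (S b2 * S a2)) b) a"
  proof (intro sw_cong)
    fix a1 a2 b1 b2
    have g: "bilin_map (\<lambda>s t. S s * t * (S b2 * S a2))"
      by (rule lin_intros)+
    have "sw Delta (\<lambda>x y. sw Delta (\<lambda>u v. S (x * u) * y * v * S b2 * S a2) b1) a1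
        = sw Delta (\<lambda>s t. S s * t * (S b2 * S a2)) (a1 * b1)"
      unfolding sw_mult[OF g] by (simp add: mult.assoc)
    then show "sw Delta (\<lambda>x y. sw Delta (\<lambda>u v. S (x * u) * y * v * S b2 * S a2) b1) a1
        = sc (eps a1 * eps b1) (S b2 * S a2)"
      using lin_antipode_left[of "\<lambda>z. z * (S b2 * S a2)" "a1 * b1"]
      by (simp add: lin_intros counit_mult)
  qed
  also have "\<dots> = sw Delta (\<lambda>a1 a2. sc (eps a1) (S b * S a2)) a"
  proof (rule sw_cong)
    fix a1 a2
    have "lin (\<lambda>z. sc (eps a1) (S z * S a2))"
      by (rule lin_intros)+
    from lin_eq_sw_counit_left[OF this, of b]
    show "sw Delta (\<lambda>b1 b2. sc (eps a1 * eps b1) (S b2 * S a2)) b = sc (eps a1) (S b * S a2)"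
      by (simp add: V.scale_scale mult.commute)
  qed
  also have "\<dots> = S b * S a"
    by (rule lin_eq_sw_counit_left[symmetric]) (rule lin_intros)+
  finally show ?thesis .
qed

lemma antipode_one: "S 1 = 1"
  using sw_one[of "\<lambda>x y. S x * y"] by (simp add: lin_intros antipode_left counit_one)

lemma antipode_antipode: "S (S a) = a"
proof -
  have "S (S a) = sw Delta (\<lambda>x y. sc (eps y) (S (S x))) a"
    by (rule lin_eq_sw_counit_right) (rule lin_intros)+
  also have "\<dots> = sw Delta (\<lambda>x y. sw Delta (\<lambda>u v. S (u * S x) * v) y) a"
    using lin_antipode_left[of "\<lambda>z. S (S x) * z" for x]
    by (intro sw_cong) (simp add: lin_intros sc_mult antipode_mult mult.assoc)
  also have "\<dots> = sw Delta (\<lambda>x y. sw Delta (\<lambda>u v. S (v * S u) * y) x) a"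
    by (rule sw_coassoc[of "\<lambda>u v y. S (v * S u) * y", symmetric]) (rule lin_intros)+
  also have "\<dots> = sw Delta (\<lambda>x y. sc (eps x) y) a"
  proof (rule sw_cong)
    fix x y
    have "sw Delta (\<lambda>u v. v * S u) x = sc (eps x) 1"
      using sw_cocomm[of "\<lambda>u v. v * S u" x] antipode_right[of x] by (simp add: lin_intros)
    then show "sw Delta (\<lambda>u v. S (v * S u) * y) x = sc (eps x) y"
      using lin_sw[of "\<lambda>z. S z * y" Delta "\<lambda>u v. v * S u" x]
      by (simp add: lin_intros lin_scale[OF lin_antipode] antipode_one sc_mult)
  qed
  also have "\<dots> = a"
    by (rule counit_left)
  finally show ?thesis .
qed

lemma bilin_map_scale_one:
  assumes "bilin sc f"
  shows "bilin_map (\<lambda>x y. sc (f x y) 1)"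
proof -
  have "lin_form (f x)" "lin_form (\<lambda>z. f z y)" for x y
    using assms by (simp_all add: bilin_def linear_iff_lin_form)
  then show ?thesis
    unfolding bilin_map_def lin_def lin_form_def
    by (simp add: V.scale_left_distrib V.scale_scale)
qed

lemma coalg_hom_comp_antipode:
  assumes B: "coalg_hom sc Delta eps B"
  shows "coalg_hom sc Delta eps (B \<circ> S)"
proof -
  have lB: "lin B"
    using B by (simp add: coalg_hom_def linear_iff_lin)
  have "sw Delta f (B (S a)) = sw Delta (\<lambda>x y. f (B (S x)) (B (S y))) a" if f: "bilin sc f" for f a
  proof -
    define g where "g x y = sc (f x y) 1" for x y
    have g: "bilin_map g"
      unfolding g_def by (rule bilin_map_scale_one[OF f])
    have gB: "bilin_map (\<lambda>x y. g (B x) (B y))"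
      by (rule lin_intros lin_bilin_map_left[OF g] lin_bilin_map_right[OF g] lB)+
    have eps_g: "eps (g x y) = f x y" for x y
      by (simp add: g_def counit_scale counit_one)
    have "sw Delta f (B (S a)) = eps (sw Delta g (B (S a)))"
      by (simp add: lin_form_sw[OF lin_form_counit] eps_g)
    also have "\<dots> = eps (sw Delta (\<lambda>x y. g (B (S x)) (B (S y))) a)"
      by (simp only: sw_coalg_hom[OF B g] sw_antipode[OF gB])
    also have "\<dots> = sw Delta (\<lambda>x y. f (B (S x)) (B (S y))) a"
      by (simp add: lin_form_sw[OF lin_form_counit] eps_g)
    finally show ?thesis .
  qed
  then show ?thesis
    using lin_compose[OF lB lin_antipode] B
    by (simp add: coalg_hom_def teq_def linear_iff_lin o_def counit_antipode)
qed

end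

section \<open>Rota-Baxter systems\<close>

locale rota_baxter_system = cocomm_hopf_algebra +
  fixes B1 B2
  assumes rb_system: "rb_system sc Delta eps S B1 B2"
begin

abbreviation cocycle where
  "cocycle \<equiv> rbs_cocycle Delta S B1 B2"

lemma cocycle_eq: "cocycle a = sw Delta (\<lambda>x y. B1 x * S (B2 y)) a"
  by (rule rbs_cocycle_def)

lemma coalg_hom_B1: "coalg_hom sc Delta eps B1"
  and coalg_hom_B2: "coalg_hom sc Delta eps B2"
  and B1_one: "B1 1 = 1"
  and B2_one: "B2 1 = 1"
  and B1_rb: "B1 a * B1 b = B1 (sw Delta (\<lambda>x y. B1 x * b * S (B2 y)) a)"
  and B2_rb: "B2 a * B2 b = B2 (sw Delta (\<lambda>x y. B1 x * b * S (B2 y)) a)"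
  using rb_system by (simp_all add: rb_system_def)

lemma lin_B1: "lin B1"
  and lin_B2: "lin B2"
  using coalg_hom_B1 coalg_hom_B2 by (simp_all add: coalg_hom_def linear_iff_lin)

lemma counit_B2: "eps (B2 a) = eps a"
  using coalg_hom_B2 by (simp add: coalg_hom_def)

lemma lin_B1_compose: "lin f \<Longrightarrow> lin (\<lambda>x. B1 (f x))"
  by (rule lin_compose[OF lin_B1])

lemma lin_B2_compose: "lin f \<Longrightarrow> lin (\<lambda>x. B2 (f x))"
  by (rule lin_compose[OF lin_B2])

lemmas rb_lin_intros = lin_intros lin_B1_compose lin_B2_compose

lemma B1_cocycle: "B1 (cocycle a) = B1 a"
  using B1_rb[of a 1] by (simp add: B1_one cocycle_eq)

lemma B2_cocycle: "B2 (cocycle a) = B2 a"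
  using B2_rb[of a 1] by (simp add: B2_one cocycle_eq)

lemma sw_B1_mult_antipode_B2:
  assumes g: "bilin_map g"
  shows "sw Delta g (B1 x * S (B2 y))
       = sw Delta (\<lambda>m n. sw Delta (\<lambda>u v. g (B1 m * S (B2 u)) (B1 n * S (B2 v))) y) x"
proof -
  note R = rb_lin_intros lin_bilin_map_left[OF g] lin_bilin_map_right[OF g]
  have "sw Delta g (B1 x * S (B2 y))
      = sw Delta (\<lambda>m n. sw Delta (\<lambda>u v. g (m * u) (n * v)) (S (B2 y))) (B1 x)"
    by (rule sw_mult[OF g])
  also have "\<dots> = sw Delta (\<lambda>m n. sw Delta (\<lambda>u v. g (m * S (B2 u)) (n * S (B2 v))) y) (B1 x)"
  proof (rule sw_cong)
    fix m n
    have "bilin_map (\<lambda>p q. g (m * p) (n * q))" "bilin_map (\<lambda>p q. g (m * S p) (n * S q))"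
      by (rule R)+
    then show "sw Delta (\<lambda>u v. g (m * u) (n * v)) (S (B2 y))
        = sw Delta (\<lambda>u v. g (m * S (B2 u)) (n * S (B2 v))) y"
      by (simp only: sw_antipode sw_coalg_hom[OF coalg_hom_B2])
  qed
  also have "\<dots> = sw Delta (\<lambda>m n. sw Delta (\<lambda>u v. g (B1 m * S (B2 u)) (B1 n * S (B2 v))) y) x"
    by (rule sw_coalg_hom[OF coalg_hom_B1]) (rule R)+
  finally show ?thesis .
qed

lemma sw_cocycle:
  assumes g: "bilin_map g"
  shows "sw Delta g (cocycle a) = sw Delta (\<lambda>x y. g (cocycle x) (cocycle y)) a"
proof -
  note R = rb_lin_intros lin_bilin_map_left[OF g] lin_bilin_map_right[OF g]
  have "sw Delta g (cocycle a) = sw Delta (\<lambda>x y. sw Delta g (B1 x * S (B2 y))) a"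
    unfolding cocycle_eq by (rule lin_sw[OF lin_sw_Delta[OF g]])
  also have "\<dots> = sw Delta (\<lambda>x y. sw Delta (\<lambda>m n.
      sw Delta (\<lambda>u v. g (B1 m * S (B2 u)) (B1 n * S (B2 v))) y) x) a"
    by (simp only: sw_B1_mult_antipode_B2[OF g])
  also have "\<dots> = sw Delta (\<lambda>x y. sw Delta (\<lambda>u v.
      sw Delta (\<lambda>p q. g (B1 u * S (B2 v)) (B1 p * S (B2 q))) y) x) a"
    by (rule sw_swap_middle) (rule R)+
  also have "\<dots> = sw Delta (\<lambda>x y. g (cocycle x) (cocycle y)) a"
  proof (rule sw_cong)
    fix x y
    have "g (cocycle x) (cocycle y) = sw Delta (\<lambda>u v. g (B1 u * S (B2 v)) (cocycle y)) x"
      unfolding cocycle_eq[of x] by (rule lin_sw) (rule R)+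
    also have "\<dots> = sw Delta (\<lambda>u v. sw Delta (\<lambda>p q. g (B1 u * S (B2 v)) (B1 p * S (B2 q))) y) x"
      unfolding cocycle_eq[of y] by (intro sw_cong lin_sw) (rule R)+
    finally show "sw Delta (\<lambda>u v. sw Delta (\<lambda>p q. g (B1 u * S (B2 v)) (B1 p * S (B2 q))) y) x
        = g (cocycle x) (cocycle y)" ..
  qed
  finally show ?thesis .
qed

lemma cocycle_idem: "cocycle (cocycle a) = cocycle a"
proof -
  have "cocycle (cocycle a) = sw Delta (\<lambda>x y. B1 x * S (B2 y)) (cocycle a)"
    by (rule cocycle_eq)
  also have "\<dots> = sw Delta (\<lambda>x y. B1 (cocycle x) * S (B2 (cocycle y))) a"
    by (rule sw_cocycle) (rule rb_lin_intros)+
  also have "\<dots> = cocycle a"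
    unfolding B1_cocycle B2_cocycle by (rule cocycle_eq[symmetric])
  finally show ?thesis .
qed

context
  assumes cocycle_surj: "surj cocycle"
begin

lemma cocycle_eq_self: "cocycle a = a"
  using cocycle_surj cocycle_idem by (metis surjD)

lemma B1_eq_sw: "B1 a = sw Delta (\<lambda>x y. x * B2 y) a"
proof -
  have "sw Delta (\<lambda>x y. x * B2 y) a
      = sw Delta (\<lambda>x y. sw Delta (\<lambda>u v. B1 u * S (B2 v) * B2 y) x) a"
  proof (rule sw_cong)
    fix x y
    have "lin (\<lambda>z. z * B2 y)"
      by (rule lin_intros)+
    from lin_sw[OF this, of Delta "\<lambda>u v. B1 u * S (B2 v)" x]
    show "x * B2 y = sw Delta (\<lambda>u v. B1 u * S (B2 v) * B2 y) x"
      by (simp only: cocycle_eq[symmetric] cocycle_eq_self)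
  qed
  also have "\<dots> = sw Delta (\<lambda>x y. sw Delta (\<lambda>u v. B1 x * S (B2 u) * B2 v) y) a"
    by (rule sw_coassoc) (rule rb_lin_intros)+
  also have "\<dots> = sw Delta (\<lambda>x y. sc (eps y) (B1 x)) a"
  proof (rule sw_cong)
    fix x y
    have g: "bilin_map (\<lambda>u v. S u * v)" and l: "lin (\<lambda>z. B1 x * z)"
      by (rule lin_intros)+
    have "sw Delta (\<lambda>u v. S (B2 u) * B2 v) y = sc (eps y) 1"
      using sw_coalg_hom[OF coalg_hom_B2 g, of y] by (simp add: antipode_left counit_B2)
    then show "sw Delta (\<lambda>u v. B1 x * S (B2 u) * B2 v) y = sc (eps y) (B1 x)"
      using lin_sw[OF l, of Delta "\<lambda>u v. S (B2 u) * B2 v" y] by (simp add: mult.assoc sc_mult)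
  qed
  also have "\<dots> = B1 a"
    by (rule lin_eq_sw_counit_right[symmetric, OF lin_B1])
  finally show ?thesis ..
qed

lemma B2_eq_sw: "B2 a = sw Delta (\<lambda>x y. S x * B1 y) a"
proof -
  have "sw Delta (\<lambda>x y. S x * B1 y) a = sw Delta (\<lambda>x y. sw Delta (\<lambda>u v. S x * u * B2 v) y) a"
  proof (rule sw_cong)
    fix x y
    have "lin (\<lambda>z. S x * z)"
      by (rule lin_intros)+
    from lin_sw[OF this, of Delta "\<lambda>u v. u * B2 v" y]
    show "S x * B1 y = sw Delta (\<lambda>u v. S x * u * B2 v) y"
      by (simp add: B1_eq_sw mult.assoc)
  qed
  also have "\<dots> = sw Delta (\<lambda>x y. sw Delta (\<lambda>u v. S u * v * B2 y) x) a"
    by (rule sw_coassoc[of "\<lambda>x u v. S x * u * B2 v", symmetric]) (rule rb_lin_intros)+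
  also have "\<dots> = sw Delta (\<lambda>x y. sc (eps x) (B2 y)) a"
  proof (rule sw_cong)
    fix x y
    have "lin (\<lambda>z. z * B2 y)"
      by (rule lin_intros)+
    from lin_antipode_left[OF this, of x]
    show "sw Delta (\<lambda>u v. S u * v * B2 y) x = sc (eps x) (B2 y)"
      by simp
  qed
  also have "\<dots> = B2 a"
    by (rule lin_eq_sw_counit_left[symmetric, OF lin_B2])
  finally show ?thesis ..
qed

lemma rb_hopf_B2: "rb_hopf sc Delta eps S B2"
  unfolding rb_hopf_def
proof (intro conjI allI)
  fix a b
  have "sw Delta (\<lambda>x y. B1 x * b * S (B2 y)) a
      = sw Delta (\<lambda>x y. sw Delta (\<lambda>u v. u * B2 v * b * S (B2 y)) x) a"
  proof (rule sw_cong)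
    fix x y
    have "lin (\<lambda>z. z * b * S (B2 y))"
      by (rule lin_intros)+
    from lin_sw[OF this, of Delta "\<lambda>u v. u * B2 v" x]
    show "B1 x * b * S (B2 y) = sw Delta (\<lambda>u v. u * B2 v * b * S (B2 y)) x"
      by (simp add: B1_eq_sw)
  qed
  also have "\<dots> = sw Delta (\<lambda>x y. sw Delta (\<lambda>u v. x * B2 u * b * S (B2 v)) y) a"
    by (rule sw_coassoc) (rule rb_lin_intros)+
  finally show "B2 a * B2 b = B2 (sw Delta (\<lambda>x y. sw Delta (\<lambda>u v. x * B2 u * b * S (B2 v)) y) a)"
    by (simp add: B2_rb)
qed (rule hopf coalg_hom_B2)+

lemma antipode_B2: "S (B2 a) = sw Delta (\<lambda>x y. S (B1 y) * x) a"
  unfolding B2_eq_sw lin_sw[OF lin_antipode] by (simp add: antipode_mult antipode_antipode)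

lemma rb_identity_B1_antipode:
  "B1 (S a) * B1 (S b)
     = B1 (S (sw Delta (\<lambda>x y. sw Delta (\<lambda>u v. x * B1 (S u) * b * S (B1 (S v))) y) a))"
proof -
  txt \<open>By antipode_B2 and sw_antipode, S (B2 (S y)) = S (B1 (S y2)) S y1; cocommutativity
    then moves the three tensor legs into place.\<close>
  define F where "F x p q = B1 (S x) * S b * S (B1 (S q)) * S p" for x p q
  have F: "trilin_map F"
    unfolding F_def by (rule rb_lin_intros)+
  have "bilin_map (\<lambda>x y. B1 x * S b * S (B2 y))"
    by (rule rb_lin_intros)+
  then have "B1 (S a) * B1 (S b) = B1 (sw Delta (\<lambda>x y. B1 (S x) * S b * S (B2 (S y))) a)"
    by (simp only: B1_rb sw_antipode)
  also have "sw Delta (\<lambda>x y. B1 (S x) * S b * S (B2 (S y))) a = sw Delta (\<lambda>x y. sw Delta (F x) y) a"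
  proof (rule sw_cong)
    fix x y
    have g: "bilin_map (\<lambda>p q. B1 (S x) * S b * (S (B1 q) * p))"
      by (rule rb_lin_intros)+
    have "B1 (S x) * S b * S (B2 (S y)) = sw Delta (\<lambda>p q. B1 (S x) * S b * (S (B1 q) * p)) (S y)"
      unfolding antipode_B2 by (rule lin_sw) (rule lin_intros)+
    also have "\<dots> = sw Delta (F x) y"
      unfolding sw_antipode[OF g] F_def by (simp add: mult.assoc)
    finally show "B1 (S x) * S b * S (B2 (S y)) = sw Delta (F x) y" .
  qed
  also have "\<dots> = sw Delta (\<lambda>x y. sw Delta (\<lambda>u v. F u x v) y) a"
    by (rule sw_swap12[OF F])
  also have "\<dots> = sw Delta (\<lambda>x y. sw Delta (\<lambda>u v. F v x u) y) a"
    by (rule sw_swap23) (unfold F_def, (rule rb_lin_intros)+)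
  also have "\<dots> = S (sw Delta (\<lambda>x y. sw Delta (\<lambda>u v. x * B1 (S u) * b * S (B1 (S v))) y) a)"
    unfolding lin_sw[OF lin_antipode] by (simp add: F_def antipode_mult antipode_antipode mult.assoc)
  finally show ?thesis .
qed

lemma rb_hopf_B1_antipode: "rb_hopf sc Delta eps S (B1 \<circ> S)"
  unfolding rb_hopf_def
  using hopf coalg_hom_comp_antipode[OF coalg_hom_B1] rb_identity_B1_antipode by simp

end

end

theorem mainTheorem5:
  fixes sc :: "'k::field_char_0 \<Rightarrow> 'h::ring_1 \<Rightarrow> 'h"
    and Delta :: "'h \<Rightarrow> ('h \<times> 'h) list"
    and eps :: "'h \<Rightarrow> 'k"
    and S B1 B2 :: "'h \<Rightarrow> 'h"
  assumes "rb_system sc Delta eps S B1 B2"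
    and "surj (rbs_cocycle Delta S B1 B2)"
  shows "rb_hopf sc Delta eps S B2 \<and> rb_hopf sc Delta eps S (B1 \<circ> S)"
proof -
  interpret rota_baxter_system sc Delta eps S B1 B2
    using assms(1) by unfold_locales (simp_all add: rb_system_def)
  show ?thesis
    using rb_hopf_B2 rb_hopf_B1_antipode assms(2) by blast
qed

end
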